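(* Let $g,r,d$ and ramification sequences $\alpha,\beta$ satisfy $\rho(g,r,d,\alpha,\beta)=0$. Then the EH group acts transitively on $YT(g,r,d,\alpha,\beta)$.
   Context: Ramification sequences: $\alpha=(\alpha_0,\dots,\alpha_r)$ integers with $d-r\ge\alpha_0\ge\cdots\ge\alpha_r\ge0$, $|\alpha|=\sum\alpha_i$; $g-d+r\ge0$; $\rho(g,r,d,\alpha,\beta)=g-(r+1)(g-d+r)-|\alpha|-|\beta|$. Skew diagram $\sigma(g,r,d,\alpha,\beta)$ (with $m=g-d+r$): rows $k=1,\dots,r+1$ numbered top to bottom, row $k$ consisting of boxes $(k,c)$ with $\alpha_0-\alpha_{r+1-k}<c\le\alpha_0+m+\beta_{k-1}$ (columns numbered left to right); it has $g$ boxes when $\rho=0$. $YT(g,r,d,\alpha,\beta)$ is the set of standard Young tableaux of this shape: bijective fillings with $1,\dots,g$ strictly increasing along rows (left to right) and columns (top to bottom). The distance between boxes $(i,j),(i',j')$ is $|i-i'|+|j-j'|$. For $1\le t<g$ and $a>0$, $\pi_{t,a}$ is the permutation of $YT(g,r,d,\alpha,\beta)$ exchanging the entries $t$ and $t+1$ in every tableau where they lie in different rows and different columns at distance exactly $a$, and fixing all other tableaux. The EH group is the subgroup of the symmetric group on $YT(g,r,d,\alpha,\beta)$ generated by all $\pi_{t,a}$. *)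

theory Defs
  imports Main "HOL-Algebra.Bij" "HOL-Algebra.Generated_Groups"
begin

text \<open>Ramification sequence alpha = (alpha 0, ..., alpha r) with d - r >= alpha 0 >= ... >= alpha r >= 0.
  Entries are natural numbers; d >= r is required so that d - r is meaningful.\<close>
definition ram_seq :: "nat \<Rightarrow> nat \<Rightarrow> (nat \<Rightarrow> nat) \<Rightarrow> bool" where
  "ram_seq r d alpha \<longleftrightarrow> r \<le> d \<and> alpha 0 \<le> d - r \<and> (\<forall>i<r. alpha (Suc i) \<le> alpha i)"

definition size_seq :: "nat \<Rightarrow> (nat \<Rightarrow> nat) \<Rightarrow> int" where
  "size_seq r alpha = (\<Sum>i\<le>r. int (alpha i))"

definition rho :: "nat \<Rightarrow> nat \<Rightarrow> nat \<Rightarrow> (nat \<Rightarrow> nat) \<Rightarrow> (nat \<Rightarrow> nat) \<Rightarrow> int" where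
  "rho g r d alpha beta =
     int g - (int r + 1) * (int g - int d + int r) - size_seq r alpha - size_seq r beta"

text \<open>The skew diagram sigma(g,r,d,alpha,beta); boxes are (row, column), m = g - d + r.\<close>
definition skew_shape :: "nat \<Rightarrow> nat \<Rightarrow> nat \<Rightarrow> (nat \<Rightarrow> nat) \<Rightarrow> (nat \<Rightarrow> nat) \<Rightarrow> (nat \<times> nat) set" where
  "skew_shape g r d alpha beta =
     {(k, c). 1 \<le> k \<and> k \<le> r + 1 \<and>
        int (alpha 0) - int (alpha (r + 1 - k)) < int c \<and>
        int c \<le> int (alpha 0) + (int g - int d + int r) + int (beta (k - 1))}"

definition YT :: "nat \<Rightarrow> nat \<Rightarrow> nat \<Rightarrow> (nat \<Rightarrow> nat) \<Rightarrow> (nat \<Rightarrow> nat) \<Rightarrow> ((nat \<times> nat) \<Rightarrow> nat) set" where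
  "YT g r d alpha beta =
    (let S = skew_shape g r d alpha beta in
     {T. T \<in> extensional S \<and> bij_betw T S {1..g} \<and>
         (\<forall>i j j'. (i, j) \<in> S \<longrightarrow> (i, j') \<in> S \<longrightarrow> j < j' \<longrightarrow> T (i, j) < T (i, j')) \<and>
         (\<forall>i i' j. (i, j) \<in> S \<longrightarrow> (i', j) \<in> S \<longrightarrow> i < i' \<longrightarrow> T (i, j) < T (i', j))})"

definition box_dist :: "nat \<times> nat \<Rightarrow> nat \<times> nat \<Rightarrow> nat" where
  "box_dist x y = nat \<bar>int (fst x) - int (fst y)\<bar> + nat \<bar>int (snd x) - int (snd y)\<bar>"

definition swappable :: "(nat \<times> nat) set \<Rightarrow> nat \<Rightarrow> nat \<Rightarrow> ((nat \<times> nat) \<Rightarrow> nat) \<Rightarrow> bool" where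
  "swappable S t a T \<longleftrightarrow>
     (\<exists>x\<in>S. \<exists>y\<in>S. T x = t \<and> T y = t + 1 \<and> fst x \<noteq> fst y \<and> snd x \<noteq> snd y \<and> box_dist x y = a)"

definition swap_entries :: "(nat \<times> nat) set \<Rightarrow> nat \<Rightarrow> ((nat \<times> nat) \<Rightarrow> nat) \<Rightarrow> ((nat \<times> nat) \<Rightarrow> nat)" where
  "swap_entries S t T = (\<lambda>x\<in>S. if T x = t then t + 1 else if T x = t + 1 then t else T x)"

definition pi_perm :: "nat \<Rightarrow> nat \<Rightarrow> nat \<Rightarrow> (nat \<Rightarrow> nat) \<Rightarrow> (nat \<Rightarrow> nat) \<Rightarrow> nat \<Rightarrow> nat
    \<Rightarrow> (((nat \<times> nat) \<Rightarrow> nat) \<Rightarrow> ((nat \<times> nat) \<Rightarrow> nat))" where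
  "pi_perm g r d alpha beta t a =
    (let S = skew_shape g r d alpha beta in
     (\<lambda>T\<in>YT g r d alpha beta. if swappable S t a T then swap_entries S t T else T))"

definition EH_group where
  "EH_group g r d alpha beta =
     generate (BijGroup (YT g r d alpha beta))
       {pi_perm g r d alpha beta t a | t a. 1 \<le> t \<and> t < g \<and> 0 < a}"

end

theory Submission
  imports Defs "HOL-Combinatorics.Transposition"
begin

text \<open>Call a pair of boxes an inversion if the two
  fillings order it differently. If there is an inversion, there is one whose entries in the
  first filling are consecutive, \<open>t\<close> and \<open>t + 1\<close>. Since both fillings increase along rows and
  columns, these two boxes lie in different rows and different columns, so \<open>\<pi>\<^sub>t\<^sub>,\<^sub>a\<close>, with \<open>a\<close>
  their distance, swaps \<open>t\<close> and \<open>t + 1\<close> in the first filling and removes exactly this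
  inversion. Induction on the number of inversions finishes the proof.\<close>

definition is_SYT :: "(nat \<times> nat) set \<Rightarrow> nat \<Rightarrow> ((nat \<times> nat) \<Rightarrow> nat) \<Rightarrow> bool" where
  "is_SYT S g T \<longleftrightarrow> T \<in> extensional S \<and> bij_betw T S {1..g} \<and>
     (\<forall>i j j'. (i, j) \<in> S \<longrightarrow> (i, j') \<in> S \<longrightarrow> j < j' \<longrightarrow> T (i, j) < T (i, j')) \<and>
     (\<forall>i i' j. (i, j) \<in> S \<longrightarrow> (i', j) \<in> S \<longrightarrow> i < i' \<longrightarrow> T (i, j) < T (i', j))"

definition swap_perm ::
    "(nat \<times> nat) set \<Rightarrow> nat \<Rightarrow> nat \<Rightarrow> nat \<Rightarrow> ((nat \<times> nat) \<Rightarrow> nat) \<Rightarrow> ((nat \<times> nat) \<Rightarrow> nat)" where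
  "swap_perm S g t a =
     (\<lambda>T\<in>{T. is_SYT S g T}. if swappable S t a T then swap_entries S t T else T)"

lemma YT_eq_is_SYT: "YT g r d alpha beta = {T. is_SYT (skew_shape g r d alpha beta) g T}"
  by (simp add: YT_def is_SYT_def Let_def)

lemma EH_group_eq_generate_swap_perm:
  "EH_group g r d alpha beta =
     generate (BijGroup {T. is_SYT (skew_shape g r d alpha beta) g T})
       {swap_perm (skew_shape g r d alpha beta) g t a | t a. 1 \<le> t \<and> t < g \<and> 0 < a}"
  by (simp add: EH_group_def pi_perm_def swap_perm_def YT_eq_is_SYT Let_def)

lemma swap_entries_eq_transpose:
  "swap_entries S t T = (\<lambda>x\<in>S. transpose t (Suc t) (T x))"
  unfolding swap_entries_def transpose_def by (rule restrict_ext) simp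

lemma swap_entries_involutory:
  assumes "T \<in> extensional S"
  shows "swap_entries S t (swap_entries S t T) = T"
  using assms by (intro extensionalityI[of _ S]) (auto simp: swap_entries_eq_transpose)

lemma box_dist_commute: "box_dist x y = box_dist y x"
  by (simp add: box_dist_def abs_minus_commute)

lemma swappable_swap_entries:
  assumes "swappable S t a T"
  shows "swappable S t a (swap_entries S t T)"
proof -
  obtain x y where "x \<in> S" "y \<in> S" "T x = t" "T y = Suc t" "fst x \<noteq> fst y"
    "snd x \<noteq> snd y" "box_dist x y = a"
    using assms unfolding swappable_def by auto
  then show ?thesis
    unfolding swappable_def swap_entries_eq_transpose
    by (intro bexI[of _ y] bexI[of _ x]) (auto simp: box_dist_commute)
qed

lemma is_SYT_bij_betw: "is_SYT S g T \<Longrightarrow> bij_betw T S {1..g}"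
  by (simp add: is_SYT_def)

lemma is_SYT_inj_on: "is_SYT S g T \<Longrightarrow> inj_on T S"
  by (simp add: is_SYT_def bij_betw_def)

lemma is_SYT_row_less_iff:
  assumes "is_SYT S g T" "x \<in> S" "y \<in> S" "fst x = fst y"
  shows "T x < T y \<longleftrightarrow> snd x < snd y"
  using assms unfolding is_SYT_def
  by (cases x, cases y) (metis fst_conv snd_conv less_asym linorder_neqE_nat less_irrefl)

lemma is_SYT_column_less_iff:
  assumes "is_SYT S g T" "x \<in> S" "y \<in> S" "snd x = snd y"
  shows "T x < T y \<longleftrightarrow> fst x < fst y"
  using assms unfolding is_SYT_def
  by (cases x, cases y) (metis fst_conv snd_conv less_asym linorder_neqE_nat less_irrefl)

lemma transpose_Suc_less:
  assumes "inj_on T S" "x \<in> S" "y \<in> S" "T x = t" "T y = Suc t"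
    and "u \<in> S" "v \<in> S" "T u < T v" "(u, v) \<noteq> (x, y)"
  shows "transpose t (Suc t) (T u) < transpose t (Suc t) (T v)"
proof -
  have "\<not> (T u = t \<and> T v = Suc t)"
    using assms inj_onD[OF assms(1)] by metis
  then show ?thesis
    using \<open>T u < T v\<close> by (auto simp: transpose_def)
qed

lemma is_SYT_swap_entries:
  assumes T: "is_SYT S g T"
    and xy: "x \<in> S" "y \<in> S" "T x = t" "T y = Suc t" "fst x \<noteq> fst y" "snd x \<noteq> snd y"
  shows "is_SYT S g (swap_entries S t T)"
proof -
  have "1 \<le> t" "Suc t \<le> g"
    using bij_betw_apply[OF is_SYT_bij_betw[OF T]] xy by fastforce+
  then have "bij_betw (transpose t (Suc t) \<circ> T) S {1..g}"
    by (intro bij_betw_trans[OF is_SYT_bij_betw[OF T]] bij_betw_transpose_iff) auto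
  then have bij: "bij_betw (\<lambda>x\<in>S. transpose t (Suc t) (T x)) S {1..g}"
    by (rule bij_betw_cong[THEN iffD1, rotated]) simp
  have less: "transpose t (Suc t) (T u) < transpose t (Suc t) (T v)"
    if "u \<in> S" "v \<in> S" "T u < T v" "fst u = fst v \<or> snd u = snd v" for u v
    using transpose_Suc_less[OF is_SYT_inj_on[OF T] xy(1-4) that(1-3)] that xy by auto
  have "transpose t (Suc t) (T (i, j)) < transpose t (Suc t) (T (i, j'))"
    if "(i, j) \<in> S" "(i, j') \<in> S" "j < j'" for i j j'
    using less[OF that(1,2)] T that unfolding is_SYT_def by simp
  moreover have "transpose t (Suc t) (T (i, j)) < transpose t (Suc t) (T (i', j))"
    if "(i, j) \<in> S" "(i', j) \<in> S" "i < i'" for i i' j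
    using less[OF that(1,2)] T that unfolding is_SYT_def by simp
  ultimately show ?thesis
    using bij unfolding is_SYT_def swap_entries_eq_transpose by simp
qed

lemma is_SYT_swap_entries_if_swappable:
  "is_SYT S g T \<Longrightarrow> swappable S t a T \<Longrightarrow> is_SYT S g (swap_entries S t T)"
  unfolding swappable_def using is_SYT_swap_entries by fastforce

lemma is_SYT_swap_perm: "is_SYT S g T \<Longrightarrow> is_SYT S g (swap_perm S g t a T)"
  using is_SYT_swap_entries_if_swappable by (simp add: swap_perm_def)

lemma swap_perm_in_Bij: "swap_perm S g t a \<in> Bij {T. is_SYT S g T}"
proof -
  have "is_SYT S g (swap_perm S g t a T) \<and> swap_perm S g t a (swap_perm S g t a T) = T"
    if "is_SYT S g T" for T
    using that is_SYT_swap_perm[OF that] swappable_swap_entries swap_entries_involutory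
    by (auto simp: swap_perm_def is_SYT_def)
  then have "bij_betw (swap_perm S g t a) {T. is_SYT S g T} {T. is_SYT S g T}"
    by (intro bij_betw_byWitness[of _ "swap_perm S g t a"]) auto
  then show ?thesis
    by (simp add: Bij_def swap_perm_def)
qed

definition inversions ::
    "'a set \<Rightarrow> ('a \<Rightarrow> 'b::linorder) \<Rightarrow> ('a \<Rightarrow> 'c::linorder) \<Rightarrow> ('a \<times> 'a) set" where
  "inversions S T1 T2 = {(u, v). u \<in> S \<and> v \<in> S \<and> T1 u < T1 v \<and> T2 v < T2 u}"

lemma finite_inversions: "finite S \<Longrightarrow> finite (inversions S T1 T2)"
  by (rule finite_subset[of _ "S \<times> S"]) (auto simp: inversions_def)

lemma card_entries_le:
  assumes "bij_betw T S {1..g}" "x \<in> S"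
  shows "card {y \<in> S. T y \<le> T x} = T x"
proof -
  have "T ` {y \<in> S. T y \<le> T x} = {v \<in> T ` S. v \<le> T x}"
    by auto
  also have "\<dots> = {1..T x}"
    using assms bij_betw_apply[OF assms] unfolding bij_betw_def by auto
  finally have "T ` {y \<in> S. T y \<le> T x} = {1..T x}" .
  moreover have "inj_on T {y \<in> S. T y \<le> T x}"
    using bij_betw_imp_inj_on[OF assms(1)] by (rule inj_on_subset) auto
  ultimately show ?thesis
    by (metis card_image card_atLeastAtMost diff_Suc_1)
qed

lemma is_SYT_eq_if_no_inversions:
  assumes T1: "is_SYT S g T1" and T2: "is_SYT S g T2" and "inversions S T1 T2 = {}"
  shows "T1 = T2"
proof (rule extensionalityI[of _ S])
  show "T1 \<in> extensional S" "T2 \<in> extensional S"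
    using T1 T2 by (auto simp: is_SYT_def)
  fix x assume x: "x \<in> S"
  have no_inv: "\<not> (T1 u < T1 v \<and> T2 v < T2 u)" if "u \<in> S" "v \<in> S" for u v
    using assms(3) that unfolding inversions_def by blast
  have "T1 y \<le> T1 x \<longleftrightarrow> T2 y \<le> T2 x" if "y \<in> S" for y
  proof (cases "y = x")
    case False
    then have "T1 y \<noteq> T1 x" "T2 y \<noteq> T2 x"
      using x that inj_onD[OF is_SYT_inj_on[OF T1]] inj_onD[OF is_SYT_inj_on[OF T2]] by blast+
    then show ?thesis
      using no_inv[OF x that] no_inv[OF that x] by linarith
  qed simp
  then have "{y \<in> S. T1 y \<le> T1 x} = {y \<in> S. T2 y \<le> T2 x}"
    by blast
  then show "T1 x = T2 x"
    using card_entries_le[OF is_SYT_bij_betw[OF T1] x] card_entries_le[OF is_SYT_bij_betw[OF T2] x]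
    by simp
qed

text \<open>Walking from \<open>x\<close> to \<open>y\<close> through the boxes with intermediate \<open>T1\<close>-entries, some step must
  reverse the \<open>T2\<close>-order.\<close>
lemma adjacent_inversion:
  assumes T1: "is_SYT S g T1" and T2: "is_SYT S g T2"
  shows "(x, y) \<in> inversions S T1 T2 \<Longrightarrow>
    \<exists>x' y'. (x', y') \<in> inversions S T1 T2 \<and> T1 y' = Suc (T1 x')"
proof (induction "T1 y - T1 x" arbitrary: x rule: less_induct)
  case less
  then have x: "x \<in> S" and y: "y \<in> S" and "T1 x < T1 y" "T2 y < T2 x"
    by (auto simp: inversions_def)
  show ?case
  proof (cases "T1 y = Suc (T1 x)")
    case True
    then show ?thesis using less.prems by blast
  next
    case False
    have "T1 ` S = {1..g}"
      using is_SYT_bij_betw[OF T1] by (rule bij_betw_imp_surj_on)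
    then have "T1 y \<in> {1..g}"
      using y by blast
    then have "Suc (T1 x) \<in> {1..g}"
      using \<open>T1 x < T1 y\<close> by simp
    then have "Suc (T1 x) \<in> T1 ` S"
      using \<open>T1 ` S = {1..g}\<close> by simp
    then obtain z where z: "z \<in> S" "T1 z = Suc (T1 x)" by auto
    have "T2 z \<noteq> T2 x"
    proof
      assume "T2 z = T2 x"
      then have "z = x"
        using inj_onD[OF is_SYT_inj_on[OF T2]] z(1) x by blast
      then show False
        using z(2) by simp
    qed
    then consider "T2 z < T2 x" | "T2 y < T2 z"
      using \<open>T2 y < T2 x\<close> by linarith
    then show ?thesis
    proof cases
      case 1
      then have "(x, z) \<in> inversions S T1 T2"
        using x z by (simp add: inversions_def)
      then show ?thesis
        using z(2) by blast
    next
      case 2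
      then have "(z, y) \<in> inversions S T1 T2"
        using z y False \<open>T1 x < T1 y\<close> by (auto simp: inversions_def)
      moreover have "T1 y - T1 z < T1 y - T1 x"
        using z False \<open>T1 x < T1 y\<close> by auto
      ultimately show ?thesis using less.hyps by blast
    qed
  qed
qed

lemma inversion_different_row_column:
  assumes "is_SYT S g T1" "is_SYT S g T2" "(x, y) \<in> inversions S T1 T2"
  shows "fst x \<noteq> fst y" "snd x \<noteq> snd y"
proof -
  have "x \<in> S" "y \<in> S" "T1 x < T1 y" "\<not> T2 x < T2 y"
    using assms(3) by (auto simp: inversions_def)
  then show "fst x \<noteq> fst y" "snd x \<noteq> snd y"
    using is_SYT_row_less_iff[OF assms(1)] is_SYT_row_less_iff[OF assms(2)]
      is_SYT_column_less_iff[OF assms(1)] is_SYT_column_less_iff[OF assms(2)] by blast+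
qed

lemma card_inversions_swap_entries_less:
  assumes T1: "is_SYT S g T1" and T2: "is_SYT S g T2"
    and xy: "(x, y) \<in> inversions S T1 T2" "T1 y = Suc (T1 x)"
  shows "card (inversions S (swap_entries S (T1 x) T1) T2) < card (inversions S T1 T2)"
proof -
  define T1' where "T1' = swap_entries S (T1 x) T1"
  have x: "x \<in> S" and y: "y \<in> S" and "T2 y < T2 x"
    using xy by (auto simp: inversions_def)
  have T1': "is_SYT S g T1'"
    unfolding T1'_def
    using is_SYT_swap_entries[OF T1 x y refl xy(2)] inversion_different_row_column[OF T1 T2 xy(1)] .
  have T1'_apply: "T1' u = transpose (T1 x) (Suc (T1 x)) (T1 u)" if "u \<in> S" for u
    using that by (simp add: T1'_def swap_entries_eq_transpose)
  have T1'_xy: "T1' y = T1 x" "T1' x = Suc (T1 x)"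
    using T1'_apply[OF y] T1'_apply[OF x] xy(2) by simp_all
  have T1_apply: "T1 u = transpose (T1 x) (Suc (T1 x)) (T1' u)" if "u \<in> S" for u
    using T1'_apply[OF that] by simp
  have "inversions S T1' T2 \<subseteq> inversions S T1 T2 - {(x, y)}"
  proof
    fix p assume "p \<in> inversions S T1' T2"
    then obtain u v where p: "p = (u, v)" "u \<in> S" "v \<in> S" "T1' u < T1' v" "T2 v < T2 u"
      by (auto simp: inversions_def)
    \<comment> \<open>\<open>(y, x)\<close> is the only pair whose \<open>T1'\<close>-order the swap reverses, and it is no inversion.\<close>
    have "(u, v) \<noteq> (y, x)"
      using p(5) \<open>T2 y < T2 x\<close> by auto
    then have "T1 u < T1 v"
      using transpose_Suc_less[OF is_SYT_inj_on[OF T1'] y x T1'_xy p(2-4)]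
      unfolding T1_apply[OF p(2)] T1_apply[OF p(3)] by blast
    moreover have "p \<noteq> (x, y)"
      using p(1,4) T1'_xy by auto
    ultimately show "p \<in> inversions S T1 T2 - {(x, y)}"
      using p by (simp add: inversions_def)
  qed
  then have "inversions S T1' T2 \<subset> inversions S T1 T2"
    using xy(1) by blast
  moreover have "finite (inversions S T1 T2)"
    using bij_betw_finite[OF is_SYT_bij_betw[OF T1]] by (simp add: finite_inversions)
  ultimately show ?thesis
    unfolding T1'_def by (rule psubset_card_mono[rotated])
qed

lemma swap_perm_eq_swap_entries_if_adjacent_inversion:
  assumes T1: "is_SYT S g T1" and T2: "is_SYT S g T2"
    and xy: "(x, y) \<in> inversions S T1 T2" "T1 y = Suc (T1 x)"
  obtains t a where "1 \<le> t" "t < g" "0 < a" "swap_perm S g t a T1 = swap_entries S t T1"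
    "t = T1 x"
proof -
  have x: "x \<in> S" and y: "y \<in> S"
    using xy by (auto simp: inversions_def)
  note rc = inversion_different_row_column[OF T1 T2 xy(1)]
  have "0 < box_dist x y"
    using rc by (auto simp: box_dist_def)
  moreover have "1 \<le> T1 x" "T1 x < g"
    using bij_betw_apply[OF is_SYT_bij_betw[OF T1]] x y xy(2) by fastforce+
  moreover have "swappable S (T1 x) (box_dist x y) T1"
    unfolding swappable_def using x y xy(2) rc by force
  then have "swap_perm S g (T1 x) (box_dist x y) T1 = swap_entries S (T1 x) T1"
    using T1 by (simp add: swap_perm_def)
  ultimately show ?thesis
    using that by blast
qed

lemma carrier_BijGroup: "carrier (BijGroup A) = Bij A"
  by (simp add: BijGroup_def)

lemma BijGroup_mult_apply:
  "\<sigma> \<in> Bij A \<Longrightarrow> \<pi> \<in> Bij A \<Longrightarrow> x \<in> A \<Longrightarrow> (\<sigma> \<otimes>\<^bsub>BijGroup A\<^esub> \<pi>) x = \<sigma> (\<pi> x)"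
  by (simp add: BijGroup_def compose_def)

theorem swap_perms_act_transitively:
  assumes T1: "is_SYT S g T1" and T2: "is_SYT S g T2"
  shows "\<exists>\<sigma>\<in>generate (BijGroup {T. is_SYT S g T})
           {swap_perm S g t a | t a. 1 \<le> t \<and> t < g \<and> 0 < a}. \<sigma> T1 = T2"
  using T1
proof (induction "card (inversions S T1 T2)" arbitrary: T1 rule: less_induct)
  case less
  let ?Y = "{T. is_SYT S g T}"
  let ?G = "generate (BijGroup ?Y) {swap_perm S g t a | t a. 1 \<le> t \<and> t < g \<and> 0 < a}"
  have G_Bij: "?G \<subseteq> Bij ?Y"
    using swap_perm_in_Bij by (intro group.generate_incl[OF group_BijGroup, unfolded carrier_BijGroup]) blast
  show ?case
  proof (cases "inversions S T1 T2 = {}")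
    case True
    then have "T1 = T2"
      using is_SYT_eq_if_no_inversions[OF less.prems T2] by simp
    moreover have "\<one>\<^bsub>BijGroup ?Y\<^esub> T1 = T1"
      using less.prems by (simp add: BijGroup_def)
    ultimately show ?thesis
      using generate.one by blast
  next
    case False
    then obtain x y where xy: "(x, y) \<in> inversions S T1 T2" "T1 y = Suc (T1 x)"
      using adjacent_inversion[OF less.prems T2] by fast
    then obtain t a where "1 \<le> t" "t < g" "0 < a" and
      \<pi>T1: "swap_perm S g t a T1 = swap_entries S t T1" and t: "t = T1 x"
      using swap_perm_eq_swap_entries_if_adjacent_inversion[OF less.prems T2] by blast
    then have \<pi>: "swap_perm S g t a \<in> ?G"
      by (blast intro: generate.incl)
    have "is_SYT S g (swap_entries S t T1)"
      using is_SYT_swap_perm[OF less.prems, of t a] \<pi>T1 by simp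
    then obtain \<sigma> where \<sigma>: "\<sigma> \<in> ?G" "\<sigma> (swap_entries S t T1) = T2"
      using less.hyps card_inversions_swap_entries_less[OF less.prems T2 xy] t by blast
    have "(\<sigma> \<otimes>\<^bsub>BijGroup ?Y\<^esub> swap_perm S g t a) T1 = \<sigma> (swap_perm S g t a T1)"
      using less.prems by (intro BijGroup_mult_apply[OF subsetD[OF G_Bij \<sigma>(1)] swap_perm_in_Bij]) simp
    then have "(\<sigma> \<otimes>\<^bsub>BijGroup ?Y\<^esub> swap_perm S g t a) T1 = T2"
      using \<sigma>(2) \<pi>T1 by simp
    moreover have "\<sigma> \<otimes>\<^bsub>BijGroup ?Y\<^esub> swap_perm S g t a \<in> ?G"
      using \<sigma>(1) \<pi> by (rule generate.eng)
    ultimately show ?thesis by blast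
  qed
qed

theorem proposition4p1:
  fixes g r d :: nat and alpha beta :: "nat \<Rightarrow> nat"
  assumes "ram_seq r d alpha" and "ram_seq r d beta"
    and "int g - int d + int r \<ge> 0"
    and "rho g r d alpha beta = 0"
  shows "\<forall>T1\<in>YT g r d alpha beta. \<forall>T2\<in>YT g r d alpha beta.
           \<exists>\<sigma>\<in>EH_group g r d alpha beta. \<sigma> T1 = T2"
  unfolding EH_group_eq_generate_swap_perm YT_eq_is_SYT
  using swap_perms_act_transitively by blast

end
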